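(* For every two hereditary class properties $\Pi_1$ and $\Pi_2$, \[(\Pi_1\cap\Pi_2)^+=\Pi_1^+\cap\Pi_2^+\qquad\text{and}\qquad(\Pi_1\cap\Pi_2)^\ast=\Pi_1^\ast\cap\Pi_2^\ast.\] In particular, for hereditary class properties $\Pi,\Lambda_1,\Lambda_2$: $\Pi=\Lambda_1^+=\Lambda_2^+$ implies $\Pi=(\Lambda_1\cap\Lambda_2)^+$, and $\Pi=\Lambda_1^\ast=\Lambda_2^\ast$ implies $\Pi=(\Lambda_1\cap\Lambda_2)^\ast$.
   Context: Graphs are finite and simple. A hereditary class is a class closed under isomorphism and induced subgraphs; a hereditary class property is a set $\Pi$ of hereditary classes such that $\mathscr C\in\Pi$, $\mathscr D$ hereditary, $\mathscr D\subseteq\mathscr C$ imply $\mathscr D\in\Pi$. For non-decreasing $f$ and positive integer $p$, $\mathscr C$ has an $f$-bounded $\Pi$-decomposition with parameter $p$ if there is $\mathscr D_p\in\Pi$ such that every $G\in\mathscr C$ has a partition $V_1,\dots,V_N$ of $V(G)$ with $N\le f(|G|)$ and $G[V_{i_1}\cup\dots\cup V_{i_p}]\in\mathscr D_p$ for all $i_1,\dots,i_p\in[N]$. $\Pi^+$ (resp. $\Pi^\ast$) is the set of hereditary classes that, for every positive integer $p$, have an $f$-bounded $\Pi$-decomposition with parameter $p$ for some constant function $f$ (resp. some non-decreasing $f$ with $f(n)=n^{o(1)}$). *)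

theory Defs
  imports Complex_Main
begin

text \<open>Finite simple graphs with vertices drawn from nat (every finite graph is
isomorphic to such a graph). A graph is a pair (V, E) with V finite and every
edge a 2-element subset of V.\<close>

type_synonym graph = "nat set \<times> nat set set"

definition is_graph :: "graph \<Rightarrow> bool" where
  "is_graph G \<longleftrightarrow> finite (fst G) \<and> (\<forall>e\<in>snd G. card e = 2 \<and> e \<subseteq> fst G)"

definition gsize :: "graph \<Rightarrow> nat" where
  "gsize G = card (fst G)"

definition induced :: "graph \<Rightarrow> nat set \<Rightarrow> graph" where
  "induced G S = (S \<inter> fst G, {e \<in> snd G. e \<subseteq> S})"

definition graph_iso :: "graph \<Rightarrow> graph \<Rightarrow> bool" where
  "graph_iso G H \<longleftrightarrow> (\<exists>h. bij_betw h (fst G) (fst H) \<and>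
     (\<forall>u\<in>fst G. \<forall>v\<in>fst G. {u, v} \<in> snd G \<longleftrightarrow> {h u, h v} \<in> snd H))"

definition hereditary :: "graph set \<Rightarrow> bool" where
  "hereditary C \<longleftrightarrow> C \<subseteq> {G. is_graph G}
     \<and> (\<forall>G\<in>C. \<forall>H. is_graph H \<and> graph_iso G H \<longrightarrow> H \<in> C)
     \<and> (\<forall>G\<in>C. \<forall>S. S \<subseteq> fst G \<longrightarrow> induced G S \<in> C)"

definition hered_property :: "graph set set \<Rightarrow> bool" where
  "hered_property \<Pi> \<longleftrightarrow> (\<forall>C\<in>\<Pi>. hereditary C)
     \<and> (\<forall>C\<in>\<Pi>. \<forall>D. hereditary D \<and> D \<subseteq> C \<longrightarrow> D \<in> \<Pi>)"

definition good_partition :: "(nat \<Rightarrow> real) \<Rightarrow> nat \<Rightarrow> graph set \<Rightarrow> graph \<Rightarrow> bool" where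
  "good_partition f p D G \<longleftrightarrow> (\<exists>N::nat. \<exists>P::nat \<Rightarrow> nat set.
     real N \<le> f (gsize G)
     \<and> (\<Union>i<N. P i) = fst G
     \<and> (\<forall>i<N. \<forall>j<N. i \<noteq> j \<longrightarrow> P i \<inter> P j = {})
     \<and> (\<forall>idx::nat \<Rightarrow> nat. (\<forall>j<p. idx j < N) \<longrightarrow> induced G (\<Union>j<p. P (idx j)) \<in> D))"

definition has_decomp :: "graph set set \<Rightarrow> (nat \<Rightarrow> real) \<Rightarrow> nat \<Rightarrow> graph set \<Rightarrow> bool" where
  "has_decomp \<Pi> f p C \<longleftrightarrow> (\<exists>D\<in>\<Pi>. \<forall>G\<in>C. good_partition f p D G)"

text \<open>f(n) = n^{o(1)}: f(n) = n^{g(n)} for all large n, with g(n) \<rightarrow> 0.\<close>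
definition subpoly :: "(nat \<Rightarrow> real) \<Rightarrow> bool" where
  "subpoly f \<longleftrightarrow> (\<exists>g::nat \<Rightarrow> real. g \<longlonglongrightarrow> 0 \<and>
     (\<forall>\<^sub>F n in sequentially. f n = real n powr g n))"

definition plus_closure :: "graph set set \<Rightarrow> graph set set" where
  "plus_closure \<Pi> = {C. hereditary C \<and>
     (\<forall>p::nat. p > 0 \<longrightarrow> (\<exists>c::real. has_decomp \<Pi> (\<lambda>_. c) p C))}"

definition star_closure :: "graph set set \<Rightarrow> graph set set" where
  "star_closure \<Pi> = {C. hereditary C \<and>
     (\<forall>p::nat. p > 0 \<longrightarrow> (\<exists>f. mono f \<and> subpoly f \<and> has_decomp \<Pi> f p C))}"

end

theory Submission
  imports Defs
begin

text \<open>Given decompositions of a class for \<open>\<Pi>\<^sub>1\<close> and for \<open>\<Pi>\<^sub>2\<close> with the same parameter p,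
the common refinement of the two partitions of a graph has at most \<open>N\<^sub>1 N\<^sub>2\<close> parts, and
every union of p of its parts lies inside a union of p parts of either partition; as both
target classes are hereditary, it induces a graph in their intersection. Constant bounds
and bounds of the form \<open>n\<^sup>o\<^sup>(\<^sup>1\<^sup>)\<close> are closed under products, which gives both identities;
the corollary follows by intersecting \<open>\<Pi>\<close> with itself.\<close>

lemma induced_induced:
  assumes "T \<subseteq> S"
  shows "induced (induced G S) T = induced G T"
  using assms by (auto simp: induced_def)

lemma hereditary_induced_subset:
  assumes "hereditary D" "induced G S \<in> D" "T \<subseteq> S" "T \<subseteq> fst G"
  shows "induced G T \<in> D"
proof -
  have "T \<subseteq> fst (induced G S)"
    using assms(3,4) by (auto simp: induced_def)
  then have "induced (induced G S) T \<in> D"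
    using assms(1,2) unfolding hereditary_def by blast
  then show ?thesis
    using induced_induced[OF assms(3)] by simp
qed

lemma hereditary_Int:
  assumes "hereditary D\<^sub>1" "hereditary D\<^sub>2"
  shows "hereditary (D\<^sub>1 \<inter> D\<^sub>2)"
  using assms unfolding hereditary_def by auto

lemma hered_property_hereditary:
  assumes "hered_property \<Pi>" "D \<in> \<Pi>"
  shows "hereditary D"
  using assms unfolding hered_property_def by blast

lemma hered_property_downward_closed:
  assumes "hered_property \<Pi>" "D \<in> \<Pi>" "hereditary D'" "D' \<subseteq> D"
  shows "D' \<in> \<Pi>"
  using assms unfolding hered_property_def by blast

lemma hered_property_Int_mem:
  assumes "hered_property \<Pi>\<^sub>1" "hered_property \<Pi>\<^sub>2" "D\<^sub>1 \<in> \<Pi>\<^sub>1" "D\<^sub>2 \<in> \<Pi>\<^sub>2"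
  shows "D\<^sub>1 \<inter> D\<^sub>2 \<in> \<Pi>\<^sub>1 \<inter> \<Pi>\<^sub>2"
proof -
  have "hereditary (D\<^sub>1 \<inter> D\<^sub>2)"
    using assms by (intro hereditary_Int hered_property_hereditary)
  then show ?thesis
    using assms by (blast intro: hered_property_downward_closed)
qed

definition indexed_partition :: "nat \<Rightarrow> (nat \<Rightarrow> 'a set) \<Rightarrow> 'a set \<Rightarrow> bool" where
  "indexed_partition N P V \<longleftrightarrow>
     (\<Union>i<N. P i) = V \<and> (\<forall>i<N. \<forall>j<N. i \<noteq> j \<longrightarrow> P i \<inter> P j = {})"

lemma good_partition_iff:
  "good_partition f p D G \<longleftrightarrow> (\<exists>N P. real N \<le> f (gsize G) \<and> indexed_partition N P (fst G)
     \<and> (\<forall>idx. (\<forall>j<p. idx j < N) \<longrightarrow> induced G (\<Union>j<p. P (idx j)) \<in> D))"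
  unfolding good_partition_def indexed_partition_def by blast

text \<open>Part \<open>k = i N\<^sub>2 + j\<close> of the common refinement is \<open>P\<^sub>1 i \<inter> P\<^sub>2 j\<close>.\<close>

lemma indexed_partition_refine:
  assumes P\<^sub>1: "indexed_partition N\<^sub>1 P\<^sub>1 V" and P\<^sub>2: "indexed_partition N\<^sub>2 P\<^sub>2 V"
  shows "indexed_partition (N\<^sub>1 * N\<^sub>2) (\<lambda>k. P\<^sub>1 (k div N\<^sub>2) \<inter> P\<^sub>2 (k mod N\<^sub>2)) V"
  unfolding indexed_partition_def
proof (intro conjI allI impI)
  show "(\<Union>k<N\<^sub>1 * N\<^sub>2. P\<^sub>1 (k div N\<^sub>2) \<inter> P\<^sub>2 (k mod N\<^sub>2)) = V"
  proof (intro equalityI subsetI)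
    fix x assume "x \<in> (\<Union>k<N\<^sub>1 * N\<^sub>2. P\<^sub>1 (k div N\<^sub>2) \<inter> P\<^sub>2 (k mod N\<^sub>2))"
    then obtain k where "k div N\<^sub>2 < N\<^sub>1" "x \<in> P\<^sub>1 (k div N\<^sub>2)"
      using less_mult_imp_div_less by blast
    then show "x \<in> V"
      using P\<^sub>1 unfolding indexed_partition_def by blast
  next
    fix x assume "x \<in> V"
    then obtain i j where ij: "i < N\<^sub>1" "x \<in> P\<^sub>1 i" "j < N\<^sub>2" "x \<in> P\<^sub>2 j"
      using P\<^sub>1 P\<^sub>2 unfolding indexed_partition_def by blast
    have "i * N\<^sub>2 + j < (i + 1) * N\<^sub>2"
      using ij by simp
    also have "\<dots> \<le> N\<^sub>1 * N\<^sub>2"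
      using ij by (intro mult_right_mono) auto
    finally show "x \<in> (\<Union>k<N\<^sub>1 * N\<^sub>2. P\<^sub>1 (k div N\<^sub>2) \<inter> P\<^sub>2 (k mod N\<^sub>2))"
      using ij by (intro UN_I[of "i * N\<^sub>2 + j"]) auto
  qed
next
  fix k l assume kl: "k < N\<^sub>1 * N\<^sub>2" "l < N\<^sub>1 * N\<^sub>2" "k \<noteq> l"
  have "N\<^sub>2 > 0"
    using kl by (cases "N\<^sub>2 = 0") auto
  have "k div N\<^sub>2 \<noteq> l div N\<^sub>2 \<or> k mod N\<^sub>2 \<noteq> l mod N\<^sub>2"
    using kl by (metis div_mod_decomp)
  then show "P\<^sub>1 (k div N\<^sub>2) \<inter> P\<^sub>2 (k mod N\<^sub>2) \<inter> (P\<^sub>1 (l div N\<^sub>2) \<inter> P\<^sub>2 (l mod N\<^sub>2)) = {}"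
  proof (rule disjE)
    assume "k div N\<^sub>2 \<noteq> l div N\<^sub>2"
    moreover have "k div N\<^sub>2 < N\<^sub>1" "l div N\<^sub>2 < N\<^sub>1"
      using kl by (simp_all add: less_mult_imp_div_less)
    ultimately have "P\<^sub>1 (k div N\<^sub>2) \<inter> P\<^sub>1 (l div N\<^sub>2) = {}"
      using P\<^sub>1 unfolding indexed_partition_def by blast
    then show ?thesis by blast
  next
    assume "k mod N\<^sub>2 \<noteq> l mod N\<^sub>2"
    moreover have "k mod N\<^sub>2 < N\<^sub>2" "l mod N\<^sub>2 < N\<^sub>2"
      using \<open>N\<^sub>2 > 0\<close> by simp_all
    ultimately have "P\<^sub>2 (k mod N\<^sub>2) \<inter> P\<^sub>2 (l mod N\<^sub>2) = {}"
      using P\<^sub>2 unfolding indexed_partition_def by blast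
    then show ?thesis by blast
  qed
qed

text \<open>Truncating the factors at 0 is what keeps the product of two monotone bounds monotone.\<close>

lemma good_partition_Int:
  assumes gp\<^sub>1: "good_partition f\<^sub>1 p D\<^sub>1 G" and gp\<^sub>2: "good_partition f\<^sub>2 p D\<^sub>2 G"
    and "hereditary D\<^sub>1" "hereditary D\<^sub>2"
  shows "good_partition (\<lambda>n. max 0 (f\<^sub>1 n) * max 0 (f\<^sub>2 n)) p (D\<^sub>1 \<inter> D\<^sub>2) G"
proof -
  obtain N\<^sub>1 P\<^sub>1 where N\<^sub>1: "real N\<^sub>1 \<le> f\<^sub>1 (gsize G)" and P\<^sub>1: "indexed_partition N\<^sub>1 P\<^sub>1 (fst G)"
    and D\<^sub>1: "\<And>idx. \<forall>j<p. idx j < N\<^sub>1 \<Longrightarrow> induced G (\<Union>j<p. P\<^sub>1 (idx j)) \<in> D\<^sub>1"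
    using gp\<^sub>1 unfolding good_partition_iff by blast
  obtain N\<^sub>2 P\<^sub>2 where N\<^sub>2: "real N\<^sub>2 \<le> f\<^sub>2 (gsize G)" and P\<^sub>2: "indexed_partition N\<^sub>2 P\<^sub>2 (fst G)"
    and D\<^sub>2: "\<And>idx. \<forall>j<p. idx j < N\<^sub>2 \<Longrightarrow> induced G (\<Union>j<p. P\<^sub>2 (idx j)) \<in> D\<^sub>2"
    using gp\<^sub>2 unfolding good_partition_iff by blast
  define Q where "Q k = P\<^sub>1 (k div N\<^sub>2) \<inter> P\<^sub>2 (k mod N\<^sub>2)" for k
  have Q: "indexed_partition (N\<^sub>1 * N\<^sub>2) Q (fst G)"
    unfolding Q_def using indexed_partition_refine[OF P\<^sub>1 P\<^sub>2] .
  have "real (N\<^sub>1 * N\<^sub>2) \<le> max 0 (f\<^sub>1 (gsize G)) * max 0 (f\<^sub>2 (gsize G))"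
    using N\<^sub>1 N\<^sub>2 by (simp add: mult_mono)
  moreover have "induced G (\<Union>j<p. Q (idx j)) \<in> D\<^sub>1 \<inter> D\<^sub>2"
    if idx: "\<forall>j<p. idx j < N\<^sub>1 * N\<^sub>2" for idx
  proof
    have in_G: "(\<Union>j<p. Q (idx j)) \<subseteq> fst G"
      using Q idx unfolding indexed_partition_def by blast
    have "induced G (\<Union>j<p. P\<^sub>1 (idx j div N\<^sub>2)) \<in> D\<^sub>1"
      using idx by (intro D\<^sub>1) (simp add: less_mult_imp_div_less)
    then show "induced G (\<Union>j<p. Q (idx j)) \<in> D\<^sub>1"
      by (rule hereditary_induced_subset[OF assms(3) _ _ in_G]) (auto simp: Q_def)
    have "induced G (\<Union>j<p. P\<^sub>2 (idx j mod N\<^sub>2)) \<in> D\<^sub>2"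
      using idx by (intro D\<^sub>2) (metis mod_less_divisor mult_0_right not_gr0 not_less0)
    then show "induced G (\<Union>j<p. Q (idx j)) \<in> D\<^sub>2"
      by (rule hereditary_induced_subset[OF assms(4) _ _ in_G]) (auto simp: Q_def)
  qed
  ultimately show ?thesis
    unfolding good_partition_iff using Q by (intro exI[of _ "N\<^sub>1 * N\<^sub>2"] exI[of _ Q]) simp
qed

lemma has_decomp_Int:
  assumes "hered_property \<Pi>\<^sub>1" "hered_property \<Pi>\<^sub>2"
    and "has_decomp \<Pi>\<^sub>1 f\<^sub>1 p C" "has_decomp \<Pi>\<^sub>2 f\<^sub>2 p C"
  shows "has_decomp (\<Pi>\<^sub>1 \<inter> \<Pi>\<^sub>2) (\<lambda>n. max 0 (f\<^sub>1 n) * max 0 (f\<^sub>2 n)) p C"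
proof -
  obtain D\<^sub>1 D\<^sub>2 where D: "D\<^sub>1 \<in> \<Pi>\<^sub>1" "D\<^sub>2 \<in> \<Pi>\<^sub>2"
    and gp: "\<And>G. G \<in> C \<Longrightarrow> good_partition f\<^sub>1 p D\<^sub>1 G \<and> good_partition f\<^sub>2 p D\<^sub>2 G"
    using assms(3,4) unfolding has_decomp_def by blast
  have hered: "hereditary D\<^sub>1" "hereditary D\<^sub>2"
    using assms(1,2) D by (simp_all add: hered_property_hereditary)
  have "good_partition (\<lambda>n. max 0 (f\<^sub>1 n) * max 0 (f\<^sub>2 n)) p (D\<^sub>1 \<inter> D\<^sub>2) G" if "G \<in> C" for G
    using gp[OF that] by (intro good_partition_Int hered) simp_all
  then show ?thesis
    unfolding has_decomp_def using hered_property_Int_mem[OF assms(1,2) D] by (intro bexI) simp_all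
qed

definition decomp_closure :: "(nat \<Rightarrow> real) set \<Rightarrow> graph set set \<Rightarrow> graph set set" where
  "decomp_closure F \<Pi> = {C. hereditary C \<and> (\<forall>p::nat. p > 0 \<longrightarrow> (\<exists>f\<in>F. has_decomp \<Pi> f p C))}"

lemma plus_closure_eq_decomp_closure: "plus_closure \<Pi> = decomp_closure (range (\<lambda>c _. c)) \<Pi>"
  unfolding plus_closure_def decomp_closure_def by blast

lemma star_closure_eq_decomp_closure:
  "star_closure \<Pi> = decomp_closure {f. mono f \<and> subpoly f} \<Pi>"
  unfolding star_closure_def decomp_closure_def by blast

lemma decomp_closure_mono:
  assumes "\<Pi> \<subseteq> \<Pi>'"
  shows "decomp_closure F \<Pi> \<subseteq> decomp_closure F \<Pi>'"
  using assms unfolding decomp_closure_def has_decomp_def by blast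

lemma decomp_closure_Int:
  assumes "hered_property \<Pi>\<^sub>1" "hered_property \<Pi>\<^sub>2"
    and F: "\<And>f\<^sub>1 f\<^sub>2. f\<^sub>1 \<in> F \<Longrightarrow> f\<^sub>2 \<in> F \<Longrightarrow> (\<lambda>n. max 0 (f\<^sub>1 n) * max 0 (f\<^sub>2 n)) \<in> F"
  shows "decomp_closure F (\<Pi>\<^sub>1 \<inter> \<Pi>\<^sub>2) = decomp_closure F \<Pi>\<^sub>1 \<inter> decomp_closure F \<Pi>\<^sub>2"
proof
  show "decomp_closure F (\<Pi>\<^sub>1 \<inter> \<Pi>\<^sub>2) \<subseteq> decomp_closure F \<Pi>\<^sub>1 \<inter> decomp_closure F \<Pi>\<^sub>2"
    using decomp_closure_mono by blast
  show "decomp_closure F \<Pi>\<^sub>1 \<inter> decomp_closure F \<Pi>\<^sub>2 \<subseteq> decomp_closure F (\<Pi>\<^sub>1 \<inter> \<Pi>\<^sub>2)"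
    unfolding decomp_closure_def using has_decomp_Int[OF assms(1,2)] F by blast
qed

lemma mono_max0_mult:
  assumes "mono (f\<^sub>1 :: nat \<Rightarrow> real)" "mono f\<^sub>2"
  shows "mono (\<lambda>n. max 0 (f\<^sub>1 n) * max 0 (f\<^sub>2 n))"
proof (rule monoI)
  fix m n :: nat assume "m \<le> n"
  then have "f\<^sub>1 m \<le> f\<^sub>1 n" "f\<^sub>2 m \<le> f\<^sub>2 n"
    using assms by (auto dest: monoD)
  then show "max 0 (f\<^sub>1 m) * max 0 (f\<^sub>2 m) \<le> max 0 (f\<^sub>1 n) * max 0 (f\<^sub>2 n)"
    by (intro mult_mono) auto
qed

lemma subpoly_max0_mult:
  assumes "subpoly f\<^sub>1" "subpoly f\<^sub>2"
  shows "subpoly (\<lambda>n. max 0 (f\<^sub>1 n) * max 0 (f\<^sub>2 n))"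
proof -
  obtain g\<^sub>1 g\<^sub>2 where g: "g\<^sub>1 \<longlonglongrightarrow> 0" "g\<^sub>2 \<longlonglongrightarrow> 0"
    and f: "\<forall>\<^sub>F n in sequentially. f\<^sub>1 n = real n powr g\<^sub>1 n"
      "\<forall>\<^sub>F n in sequentially. f\<^sub>2 n = real n powr g\<^sub>2 n"
    using assms unfolding subpoly_def by blast
  from f have "\<forall>\<^sub>F n in sequentially. max 0 (f\<^sub>1 n) * max 0 (f\<^sub>2 n) = real n powr (g\<^sub>1 n + g\<^sub>2 n)"
    by eventually_elim (simp add: powr_add)
  moreover have "(\<lambda>n. g\<^sub>1 n + g\<^sub>2 n) \<longlonglongrightarrow> 0"
    using tendsto_add[OF g] by simp
  ultimately show ?thesis
    unfolding subpoly_def by blast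
qed

lemma plus_closure_Int:
  assumes "hered_property \<Pi>\<^sub>1" "hered_property \<Pi>\<^sub>2"
  shows "plus_closure (\<Pi>\<^sub>1 \<inter> \<Pi>\<^sub>2) = plus_closure \<Pi>\<^sub>1 \<inter> plus_closure \<Pi>\<^sub>2"
  unfolding plus_closure_eq_decomp_closure by (rule decomp_closure_Int[OF assms]) auto

lemma star_closure_Int:
  assumes "hered_property \<Pi>\<^sub>1" "hered_property \<Pi>\<^sub>2"
  shows "star_closure (\<Pi>\<^sub>1 \<inter> \<Pi>\<^sub>2) = star_closure \<Pi>\<^sub>1 \<inter> star_closure \<Pi>\<^sub>2"
  unfolding star_closure_eq_decomp_closure
  by (rule decomp_closure_Int[OF assms]) (simp add: mono_max0_mult subpoly_max0_mult)

theorem mainTheorem10: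
  shows "(\<forall>\<Pi>1 \<Pi>2. hered_property \<Pi>1 \<and> hered_property \<Pi>2 \<longrightarrow>
            plus_closure (\<Pi>1 \<inter> \<Pi>2) = plus_closure \<Pi>1 \<inter> plus_closure \<Pi>2
          \<and> star_closure (\<Pi>1 \<inter> \<Pi>2) = star_closure \<Pi>1 \<inter> star_closure \<Pi>2)
       \<and> (\<forall>\<Pi> \<Lambda>1 \<Lambda>2. hered_property \<Pi> \<and> hered_property \<Lambda>1 \<and> hered_property \<Lambda>2 \<longrightarrow>
            (\<Pi> = plus_closure \<Lambda>1 \<and> \<Pi> = plus_closure \<Lambda>2 \<longrightarrow> \<Pi> = plus_closure (\<Lambda>1 \<inter> \<Lambda>2))
          \<and> (\<Pi> = star_closure \<Lambda>1 \<and> \<Pi> = star_closure \<Lambda>2 \<longrightarrow> \<Pi> = star_closure (\<Lambda>1 \<inter> \<Lambda>2)))"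
proof (intro conjI allI impI)
  fix \<Pi>\<^sub>1 \<Pi>\<^sub>2 :: "graph set set"
  assume "hered_property \<Pi>\<^sub>1 \<and> hered_property \<Pi>\<^sub>2"
  then show "plus_closure (\<Pi>\<^sub>1 \<inter> \<Pi>\<^sub>2) = plus_closure \<Pi>\<^sub>1 \<inter> plus_closure \<Pi>\<^sub>2"
    and "star_closure (\<Pi>\<^sub>1 \<inter> \<Pi>\<^sub>2) = star_closure \<Pi>\<^sub>1 \<inter> star_closure \<Pi>\<^sub>2"
    by (simp_all add: plus_closure_Int star_closure_Int)
next
  fix \<Pi> \<Lambda>\<^sub>1 \<Lambda>\<^sub>2 :: "graph set set"
  assume "hered_property \<Pi> \<and> hered_property \<Lambda>\<^sub>1 \<and> hered_property \<Lambda>\<^sub>2"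
  then have hered: "hered_property \<Lambda>\<^sub>1" "hered_property \<Lambda>\<^sub>2"
    by simp_all
  show "\<Pi> = plus_closure (\<Lambda>\<^sub>1 \<inter> \<Lambda>\<^sub>2)" if "\<Pi> = plus_closure \<Lambda>\<^sub>1 \<and> \<Pi> = plus_closure \<Lambda>\<^sub>2"
    using that plus_closure_Int[OF hered] by auto
  show "\<Pi> = star_closure (\<Lambda>\<^sub>1 \<inter> \<Lambda>\<^sub>2)" if "\<Pi> = star_closure \<Lambda>\<^sub>1 \<and> \<Pi> = star_closure \<Lambda>\<^sub>2"
    using that star_closure_Int[OF hered] by auto
qed

end
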